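(* Let $\mathcal U,\mathcal V,\mathcal X$ be real finite-dimensional Euclidean spaces, $f:\mathcal U\to(-\infty,+\infty]$ closed proper convex, $g(v)=\frac12\langle v,\Sigma_g v\rangle-\langle b,v\rangle$ with $\Sigma_g\succeq0$ self-adjoint and $b\in\mathcal V$, $\mathcal F:\mathcal X\to\mathcal U$, $\mathcal G:\mathcal X\to\mathcal V$ linear, $c\in\mathcal X$, $\sigma>0$, $\tau>0$, and $\mathcal L_\sigma(u,v;x)=f(u)+g(v)+\langle x,\mathcal F^*u+\mathcal G^*v-c\rangle+\frac\sigma2\|\mathcal F^*u+\mathcal G^*v-c\|^2$. Let $\mathcal E_g\succ0$ be self-adjoint with $\mathcal E_g\succeq\sigma^{-1}\Sigma_g+\mathcal G\mathcal G^*$, $\mathcal T_g:=\mathcal E_g-\sigma^{-1}\Sigma_g-\mathcal G\mathcal G^*$, $\mathcal T_f\succeq0$ self-adjoint on $\mathcal U$, $\widehat{\mathcal T}_f:=\mathcal T_f+\mathcal F\mathcal G^*\mathcal E_g^{-1}\mathcal G\mathcal F^*$. Let $\{(u^k,v^k,x^k)\}$ be generated by Algorithm SCB-SPALM: $(u^0,v^0,x^0)\in\mathrm{dom}f\times\mathcal V\times\mathcal X$ and $$(u^{k+1},v^{k+1})=\operatorname{argmin}_{u,v}\ \mathcal L_\sigma(u,v;x^k)+\tfrac\sigma2\|u-u^k\|^2_{\widehat{\mathcal T}_f}+\tfrac\sigma2\|v-v^k\|^2_{\mathcal T_g},\quad x^{k+1}=x^k+\tau\sigma(\mathcal F^*u^{k+1}+\mathcal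 G^*v^{k+1}-c).$$ Define $\delta_g(u,v,x):=\mathcal F\mathcal G^*\mathcal E_g^{-1}\big(b-\mathcal Gx-\Sigma_g v+\sigma\mathcal G(c-\mathcal F^*u-\mathcal G^*v)\big)$ and $\delta_g^k:=\delta_g(u^k,v^k,x^k)$. Then for every $k\ge0$, $u^{k+1},v^{k+1},x^{k+1}$ can be generated exactly by $$u^{k+1}=\operatorname{argmin}_u\ \mathcal L_\sigma(u,v^k;x^k)+\langle\delta_g^k,u\rangle+\tfrac\sigma2\|u-u^k\|^2_{\mathcal T_f},$$ $$v^{k+1}=\operatorname{argmin}_v\ \mathcal L_\sigma(u^{k+1},v;x^k)+\tfrac\sigma2\|v-v^k\|^2_{\mathcal T_g},$$ $$x^{k+1}=x^k+\tau\sigma(\mathcal F^*u^{k+1}+\mathcal G^*v^{k+1}-c).$$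
   Context: $\|w\|_{\mathcal T}^2:=\langle w,\mathcal T w\rangle$; $\succ0$/$\succeq0$ denote positive definite/semidefinite. *)

theory Defs
  imports "HOL-Analysis.Analysis" "HOL-Library.Extended_Real"
begin

definition self_adjoint :: "('a::euclidean_space \<Rightarrow> 'a) \<Rightarrow> bool" where
  "self_adjoint S \<longleftrightarrow> linear S \<and> adjoint S = S"

definition psd_op :: "('a::euclidean_space \<Rightarrow> 'a) \<Rightarrow> bool" where
  "psd_op S \<longleftrightarrow> self_adjoint S \<and> (\<forall>w. 0 \<le> w \<bullet> S w)"

definition pd_op :: "('a::euclidean_space \<Rightarrow> 'a) \<Rightarrow> bool" where
  "pd_op S \<longleftrightarrow> self_adjoint S \<and> (\<forall>w. w \<noteq> 0 \<longrightarrow> 0 < w \<bullet> S w)"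

definition wnorm2 :: "('a::euclidean_space \<Rightarrow> 'a) \<Rightarrow> 'a \<Rightarrow> real" where
  "wnorm2 T w = w \<bullet> T w"

definition proper_fun :: "('a \<Rightarrow> ereal) \<Rightarrow> bool" where
  "proper_fun f \<longleftrightarrow> (\<forall>u. f u \<noteq> -\<infinity>) \<and> (\<exists>u. f u \<noteq> \<infinity>)"

definition convex_fun :: "('a::real_vector \<Rightarrow> ereal) \<Rightarrow> bool" where
  "convex_fun f \<longleftrightarrow> convex {(u, r::real). f u \<le> ereal r}"

definition closed_fun :: "('a::topological_space \<Rightarrow> ereal) \<Rightarrow> bool" where
  "closed_fun f \<longleftrightarrow> closed {(u, r::real). f u \<le> ereal r}"

definition edom :: "('a \<Rightarrow> ereal) \<Rightarrow> 'a set" where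
  "edom f = {u. f u < \<infinity>}"

definition quad_g :: "('v::euclidean_space \<Rightarrow> 'v) \<Rightarrow> 'v \<Rightarrow> 'v \<Rightarrow> real" where
  "quad_g Sg b v = (v \<bullet> Sg v) / 2 - b \<bullet> v"

definition aug_lag ::
  "('u::euclidean_space \<Rightarrow> ereal) \<Rightarrow> ('v::euclidean_space \<Rightarrow> 'v) \<Rightarrow> 'v \<Rightarrow>
   ('x::euclidean_space \<Rightarrow> 'u) \<Rightarrow> ('x \<Rightarrow> 'v) \<Rightarrow> 'x \<Rightarrow> real \<Rightarrow> 'u \<Rightarrow> 'v \<Rightarrow> 'x \<Rightarrow> ereal" where
  "aug_lag f Sg b F G c \<sigma> u v x =
     f u + ereal (quad_g Sg b v + x \<bullet> (adjoint F u + adjoint G v - c)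
                  + \<sigma> / 2 * (norm (adjoint F u + adjoint G v - c))\<^sup>2)"

end

theory Submission
  imports Defs
begin

text \<open>
  With T_g = E_g - \<Sigma>_g/\<sigma> - G G^* the joint objective of one SCB-SPALM step has Hessian exactly
  \<sigma> E_g in v, so completing the square writes it as p(u) + \<sigma>/2 |v - v'(u)|^2_{E_g}, where v'(u)
  is one E_g-preconditioned gradient step from v^k. The completed square contributes a term
  quadratic in u, which the extra part F G^* E_g^{-1} G F^* of T'_f cancels, leaving only the
  linear correction \<delta>_g^k. So, up to a constant, p is the u-subproblem: the u-part of a joint
  minimiser minimises it, and the v-part minimises the joint objective on the slice u = u^{k+1}.
\<close>

lemma self_adjoint_inner:
  assumes "self_adjoint S"
  shows "S a \<bullet> b = a \<bullet> S b"
  using assms adjoint_works[of S a b] by (simp add: self_adjoint_def)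

lemma pd_op_bij:
  assumes "pd_op E"
  shows "bij E"
proof -
  have lin: "linear E" using assms by (simp add: pd_op_def self_adjoint_def)
  have "E w = 0 \<Longrightarrow> w = 0" for w
    using assms by (force simp: pd_op_def)
  then have "inj E" using linear_injective_0[OF lin] by blast
  then show ?thesis using linear_injective_imp_surjective[OF lin] by (simp add: bij_def)
qed

lemma pd_op_wnorm2_nonneg: "pd_op E \<Longrightarrow> 0 \<le> wnorm2 E w"
  by (cases "w = 0") (auto simp: pd_op_def wnorm2_def less_imp_le)

lemma self_adjoint_inv:
  assumes E: "self_adjoint E" and "bij E"
  shows "self_adjoint (inv E)"
proof -
  have lin: "linear E" using E by (simp add: self_adjoint_def)
  have right_inv: "E (inv E y) = y" for y using \<open>bij E\<close> by (simp add: bij_is_surj surj_f_inv_f)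
  have "inv E a \<bullet> b = a \<bullet> inv E b" for a b
    by (metis E right_inv self_adjoint_inner)
  then show ?thesis
    using inj_linear_imp_inv_linear[OF lin bij_is_inj[OF \<open>bij E\<close>]]
    by (simp add: self_adjoint_def adjoint_unique)
qed

lemma wnorm2_complete_square:
  fixes E :: "'a::euclidean_space \<Rightarrow> 'a"
  assumes E: "self_adjoint E" and "bij E" and "\<sigma> \<noteq> 0"
  shows "\<sigma> / 2 * wnorm2 E s - l \<bullet> s
       = \<sigma> / 2 * wnorm2 E (s - (1 / \<sigma>) *\<^sub>R inv E l) - l \<bullet> inv E l / (2 * \<sigma>)"
proof -
  interpret linear E using E by (simp add: self_adjoint_def)
  have "E (inv E l) = l" using \<open>bij E\<close> by (simp add: bij_is_surj surj_f_inv_f)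
  moreover have "inv E l \<bullet> E s = l \<bullet> s"
    by (metis E calculation self_adjoint_inner)
  ultimately show ?thesis
    using \<open>\<sigma> \<noteq> 0\<close>
    by (simp add: wnorm2_def diff scale inner_diff_left inner_diff_right inner_commute[of s l]
        inner_commute[of "inv E l" l] field_simps power2_eq_square)
qed

lemma is_arg_min_ereal_add_const:
  fixes h :: "'a \<Rightarrow> ereal"
  shows "is_arg_min (\<lambda>a. h a + ereal (p a + c)) P x \<longleftrightarrow> is_arg_min (\<lambda>a. h a + ereal (p a)) P x"
proof -
  have "s + ereal c < t + ereal c \<longleftrightarrow> s < t" for s t :: ereal
    by (cases s; cases t) auto
  moreover have "h a + ereal (p a + c) = h a + ereal (p a) + ereal c" for a
    by (simp add: add.assoc)
  ultimately show ?thesis by (simp add: is_arg_min_def)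
qed

lemma is_arg_min_slice:
  "is_arg_min \<phi> (\<lambda>_. True) (a, b) \<Longrightarrow> is_arg_min (\<lambda>b'. \<phi> (a, b')) (\<lambda>_. True) b"
  by (simp add: is_arg_min_def)

lemma is_arg_min_marginal:
  fixes f :: "'a \<Rightarrow> ereal"
  assumes min: "is_arg_min (\<lambda>(a, b). f a + ereal (p a + q a b)) (\<lambda>_. True) (a0, b0)"
    and q_nonneg: "\<And>a b. 0 \<le> q a b" and q_zero: "\<And>a. q a (w a) = 0"
  shows "is_arg_min (\<lambda>a. f a + ereal (p a)) (\<lambda>_. True) a0"
  unfolding is_arg_min_def
proof clarsimp
  fix a assume less: "f a + ereal (p a) < f a0 + ereal (p a0)"
  have "f a + ereal (p a + q a (w a)) = f a + ereal (p a)" by (simp add: q_zero)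
  also note less
  also have "f a0 + ereal (p a0) \<le> f a0 + ereal (p a0 + q a0 b0)"
    using q_nonneg[of a0 b0] by (intro add_left_mono) simp
  finally show False using min by (auto simp: is_arg_min_def)
qed

locale sgs_quadratic_block =
  fixes Sg :: "'v::euclidean_space \<Rightarrow> 'v" and b :: 'v
    and F :: "'x::euclidean_space \<Rightarrow> 'u::euclidean_space" and G :: "'x \<Rightarrow> 'v" and c :: 'x
    and \<sigma> :: real and Eg :: "'v \<Rightarrow> 'v"
  assumes Sg: "self_adjoint Sg" and F: "linear F" and G: "linear G" and \<sigma>: "\<sigma> \<noteq> 0"
    and Eg: "self_adjoint Eg" and Eg_bij: "bij Eg"
begin

definition smooth_lag :: "'u \<Rightarrow> 'v \<Rightarrow> 'x \<Rightarrow> real" where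
  "smooth_lag u v x = quad_g Sg b v + x \<bullet> (adjoint F u + adjoint G v - c)
     + \<sigma> / 2 * (norm (adjoint F u + adjoint G v - c))\<^sup>2"

definition neg_grad_v :: "'u \<Rightarrow> 'v \<Rightarrow> 'x \<Rightarrow> 'v" where
  "neg_grad_v u v x = b - G x - Sg v + \<sigma> *\<^sub>R G (c - adjoint F u - adjoint G v)"

definition sgs_delta :: "'u \<Rightarrow> 'v \<Rightarrow> 'x \<Rightarrow> 'u" where
  "sgs_delta u v x = F (adjoint G (inv Eg (neg_grad_v u v x)))"

abbreviation Tg :: "'v \<Rightarrow> 'v" where
  "Tg \<equiv> \<lambda>w. Eg w - (1 / \<sigma>) *\<^sub>R Sg w - G (adjoint G w)"

abbreviation Tf_hat :: "('u \<Rightarrow> 'u) \<Rightarrow> 'u \<Rightarrow> 'u" where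
  "Tf_hat Tf \<equiv> \<lambda>w. Tf w + F (adjoint G (inv Eg (G (adjoint F w))))"

abbreviation spalm_objective ::
    "('u \<Rightarrow> ereal) \<Rightarrow> ('u \<Rightarrow> 'u) \<Rightarrow> 'u \<Rightarrow> 'v \<Rightarrow> 'x \<Rightarrow> 'u \<times> 'v \<Rightarrow> ereal" where
  "spalm_objective f Tf uk vk x \<equiv> \<lambda>(u, v). aug_lag f Sg b F G c \<sigma> u v x
     + ereal (\<sigma> / 2 * wnorm2 (Tf_hat Tf) (u - uk)) + ereal (\<sigma> / 2 * wnorm2 Tg (v - vk))"

lemma aug_lag_eq_smooth_lag:
  "aug_lag f Sg b F G c \<sigma> u v x = f u + ereal (smooth_lag u v x)"
  by (simp add: aug_lag_def smooth_lag_def)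

lemma smooth_lag_expand_v:
  "smooth_lag u (v + s) x + \<sigma> / 2 * wnorm2 Tg s
     = smooth_lag u v x - neg_grad_v u v x \<bullet> s + \<sigma> / 2 * wnorm2 Eg s"
proof -
  interpret G: linear G by (fact G)
  define r where "r = adjoint F u + adjoint G v - c"
  have r_shift: "adjoint F u + adjoint G (v + s) - c = r + adjoint G s"
    by (simp add: r_def linear_add[OF adjoint_linear[OF G]])
  have grad: "neg_grad_v u v x \<bullet> s = b \<bullet> s - x \<bullet> adjoint G s - Sg v \<bullet> s - \<sigma> * (r \<bullet> adjoint G s)"
    by (simp add: neg_grad_v_def r_def G.diff G.add G.scale inner_diff_left inner_add_left
        adjoint_clauses[OF G] algebra_simps)
  have quad: "quad_g Sg b (v + s) = quad_g Sg b v + Sg v \<bullet> s + (s \<bullet> Sg s) / 2 - b \<bullet> s"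
    using self_adjoint_inner[OF Sg, of v s] Sg
    by (simp add: quad_g_def self_adjoint_def linear_add inner_add_left inner_add_right
        inner_commute[of s "Sg v"] field_simps)
  have norm: "(norm (r + adjoint G s))\<^sup>2 = (norm r)\<^sup>2 + 2 * (r \<bullet> adjoint G s) + (norm (adjoint G s))\<^sup>2"
    by (simp add: power2_norm_eq_inner inner_add_left inner_add_right inner_commute[of "adjoint G s" r])
  have Tg: "wnorm2 Tg s = wnorm2 Eg s - (s \<bullet> Sg s) / \<sigma> - (norm (adjoint G s))\<^sup>2"
    by (simp add: wnorm2_def inner_diff_right power2_norm_eq_inner adjoint_clauses[OF G] inner_commute)
  show ?thesis
    using \<sigma> unfolding smooth_lag_def r_shift r_def[symmetric] grad quad norm Tg
    by (simp add: inner_add_right field_simps)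
qed

lemma neg_grad_v_shift_u:
  "neg_grad_v u v x = neg_grad_v uk v x - \<sigma> *\<^sub>R G (adjoint F (u - uk))"
proof -
  interpret G: linear G by (fact G)
  interpret F': linear "adjoint F" by (rule adjoint_linear[OF F])
  show ?thesis by (simp add: neg_grad_v_def G.diff G.add F'.diff algebra_simps)
qed

lemma sgs_decomposition:
  "smooth_lag u v x + \<sigma> / 2 * wnorm2 (Tf_hat Tf) (u - uk) + \<sigma> / 2 * wnorm2 Tg (v - vk)
     = smooth_lag u vk x + sgs_delta uk vk x \<bullet> (u - uk) + \<sigma> / 2 * wnorm2 Tf (u - uk)
       - neg_grad_v uk vk x \<bullet> inv Eg (neg_grad_v uk vk x) / (2 * \<sigma>)
       + \<sigma> / 2 * wnorm2 Eg (v - (vk + (1 / \<sigma>) *\<^sub>R inv Eg (neg_grad_v u vk x)))"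
proof -
  have Ei: "self_adjoint (inv Eg)" by (rule self_adjoint_inv[OF Eg Eg_bij])
  interpret Ei: linear "inv Eg" using Ei by (simp add: self_adjoint_def)
  define r0 where "r0 = neg_grad_v uk vk x"
  define r where "r = neg_grad_v u vk x"
  define z where "z = G (adjoint F (u - uk))"
  have r: "r = r0 - \<sigma> *\<^sub>R z"
    unfolding r_def r0_def z_def by (rule neg_grad_v_shift_u)
  have "smooth_lag u v x + \<sigma> / 2 * wnorm2 Tg (v - vk)
      = smooth_lag u vk x + (\<sigma> / 2 * wnorm2 Eg (v - vk) - r \<bullet> (v - vk))"
    using smooth_lag_expand_v[of u vk "v - vk" x] by (simp add: r_def)
  also have "\<dots> = smooth_lag u vk x - r \<bullet> inv Eg r / (2 * \<sigma>)
      + \<sigma> / 2 * wnorm2 Eg (v - (vk + (1 / \<sigma>) *\<^sub>R inv Eg r))"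
    using wnorm2_complete_square[OF Eg Eg_bij \<sigma>, of "v - vk" r] by (simp add: diff_diff_add)
  finally have v_part: "smooth_lag u v x + \<sigma> / 2 * wnorm2 Tg (v - vk)
      = smooth_lag u vk x - r \<bullet> inv Eg r / (2 * \<sigma>)
        + \<sigma> / 2 * wnorm2 Eg (v - (vk + (1 / \<sigma>) *\<^sub>R inv Eg r))" .
  have "r \<bullet> inv Eg r = r0 \<bullet> inv Eg r0 - 2 * \<sigma> * (inv Eg r0 \<bullet> z) + \<sigma>\<^sup>2 * (z \<bullet> inv Eg z)"
    unfolding r using self_adjoint_inner[OF Ei, of z r0]
    by (simp add: Ei.diff Ei.scale inner_diff_left inner_diff_right inner_commute[of z "inv Eg r0"]
        inner_commute[of r0 "inv Eg z"] power2_eq_square algebra_simps)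
  moreover have "wnorm2 (Tf_hat Tf) (u - uk) = wnorm2 Tf (u - uk) + z \<bullet> inv Eg z"
    by (simp add: wnorm2_def z_def inner_add_right adjoint_clauses[OF F, symmetric]
        adjoint_clauses[OF G, symmetric] inner_commute)
  moreover have "sgs_delta uk vk x \<bullet> (u - uk) = inv Eg r0 \<bullet> z"
    by (simp add: sgs_delta_def r0_def z_def adjoint_clauses[OF F, symmetric]
        adjoint_clauses[OF G, symmetric] inner_commute)
  ultimately show ?thesis
    using v_part \<sigma> by (simp add: r0_def[symmetric] r_def[symmetric] field_simps power2_eq_square)
qed


lemma spalm_step_u:
  assumes "0 < \<sigma>" and "pd_op Eg"
    and min: "is_arg_min (spalm_objective f Tf uk vk x) (\<lambda>_. True) (u1, v1)"
  shows "is_arg_min (\<lambda>u. aug_lag f Sg b F G c \<sigma> u vk x + ereal (sgs_delta uk vk x \<bullet> u)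
      + ereal (\<sigma> / 2 * wnorm2 Tf (u - uk))) (\<lambda>_. True) u1"
proof -
  define r where "r = neg_grad_v uk vk x"
  define p where "p u = smooth_lag u vk x + sgs_delta uk vk x \<bullet> u + \<sigma> / 2 * wnorm2 Tf (u - uk)" for u
  define C where "C = - (sgs_delta uk vk x \<bullet> uk) - r \<bullet> inv Eg r / (2 * \<sigma>)"
  define vhat where "vhat u = vk + (1 / \<sigma>) *\<^sub>R inv Eg (neg_grad_v u vk x)" for u
  have "smooth_lag u v x + \<sigma> / 2 * wnorm2 (Tf_hat Tf) (u - uk) + \<sigma> / 2 * wnorm2 Tg (v - vk)
      = p u + C + \<sigma> / 2 * wnorm2 Eg (v - vhat u)" for u v
    using sgs_decomposition[of u v x Tf uk vk]
    unfolding p_def C_def vhat_def r_def inner_diff_right by linarith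
  then have "spalm_objective f Tf uk vk x (u, v) = f u + ereal (p u + C + \<sigma> / 2 * wnorm2 Eg (v - vhat u))"
    for u v by (simp add: aug_lag_eq_smooth_lag add.assoc)
  then have "is_arg_min (\<lambda>(u, v). f u + ereal (p u + C + \<sigma> / 2 * wnorm2 Eg (v - vhat u)))
      (\<lambda>_. True) (u1, v1)"
    using min by (simp add: is_arg_min_def)
  then have "is_arg_min (\<lambda>u. f u + ereal (p u + C)) (\<lambda>_. True) u1"
    by (rule is_arg_min_marginal[where w = vhat])
      (use \<open>0 < \<sigma>\<close> pd_op_wnorm2_nonneg[OF \<open>pd_op Eg\<close>] in \<open>simp_all add: wnorm2_def\<close>)
  then have "is_arg_min (\<lambda>u. f u + ereal (p u)) (\<lambda>_. True) u1"
    by (simp only: is_arg_min_ereal_add_const)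
  then show ?thesis
    by (simp add: p_def aug_lag_eq_smooth_lag add.assoc)
qed

lemma spalm_step_v:
  assumes "is_arg_min (spalm_objective f Tf uk vk x) (\<lambda>_. True) (u1, v1)"
  shows "is_arg_min (\<lambda>v. aug_lag f Sg b F G c \<sigma> u1 v x + ereal (\<sigma> / 2 * wnorm2 Tg (v - vk)))
      (\<lambda>_. True) v1"
proof -
  have "is_arg_min (\<lambda>v. f u1 + ereal (smooth_lag u1 v x + \<sigma> / 2 * wnorm2 Tg (v - vk)
      + \<sigma> / 2 * wnorm2 (Tf_hat Tf) (u1 - uk))) (\<lambda>_. True) v1"
    using is_arg_min_slice[OF assms] by (simp add: aug_lag_eq_smooth_lag ac_simps)
  then have "is_arg_min (\<lambda>v. f u1 + ereal (smooth_lag u1 v x + \<sigma> / 2 * wnorm2 Tg (v - vk)))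
      (\<lambda>_. True) v1"
    by (simp only: is_arg_min_ereal_add_const)
  then show ?thesis
    by (simp add: aug_lag_eq_smooth_lag add.assoc)
qed
end

theorem proposition2p3:
  fixes f :: "'u::euclidean_space \<Rightarrow> ereal"
    and Sg :: "'v::euclidean_space \<Rightarrow> 'v" and b :: 'v
    and F :: "'x::euclidean_space \<Rightarrow> 'u" and G :: "'x \<Rightarrow> 'v" and c :: 'x
    and \<sigma> \<tau> :: real
    and Eg :: "'v \<Rightarrow> 'v" and Tf :: "'u \<Rightarrow> 'u"
    and u :: "nat \<Rightarrow> 'u" and v :: "nat \<Rightarrow> 'v" and x :: "nat \<Rightarrow> 'x"
  assumes f_closed: "closed_fun f" and f_proper: "proper_fun f" and f_convex: "convex_fun f"
    and Sg_psd: "psd_op Sg"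
    and F_lin: "linear F" and G_lin: "linear G"
    and sigma_pos: "\<sigma> > 0" and tau_pos: "\<tau> > 0"
    and Eg_pd: "pd_op Eg"
    and Eg_ge: "\<And>w. w \<bullet> Eg w \<ge> (w \<bullet> Sg w) / \<sigma> + w \<bullet> G (adjoint G w)"
    and Tf_psd: "psd_op Tf"
    and init: "u 0 \<in> edom f"
    and step_uv: "\<And>k. is_arg_min
        (\<lambda>(uu, vv). aug_lag f Sg b F G c \<sigma> uu vv (x k)
           + ereal (\<sigma> / 2 * wnorm2 (\<lambda>w. Tf w + F (adjoint G (inv Eg (G (adjoint F w))))) (uu - u k))
           + ereal (\<sigma> / 2 * wnorm2 (\<lambda>w. Eg w - (1 / \<sigma>) *\<^sub>R Sg w - G (adjoint G w)) (vv - v k)))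
        (\<lambda>_. True) (u (Suc k), v (Suc k))"
    and step_x: "\<And>k. x (Suc k) = x k + (\<tau> * \<sigma>) *\<^sub>R (adjoint F (u (Suc k)) + adjoint G (v (Suc k)) - c)"
  shows "\<forall>k. is_arg_min
        (\<lambda>uu. aug_lag f Sg b F G c \<sigma> uu (v k) (x k)
           + ereal (F (adjoint G (inv Eg (b - G (x k) - Sg (v k)
                 + \<sigma> *\<^sub>R G (c - adjoint F (u k) - adjoint G (v k))))) \<bullet> uu)
           + ereal (\<sigma> / 2 * wnorm2 Tf (uu - u k)))
        (\<lambda>_. True) (u (Suc k))
     \<and> is_arg_min
        (\<lambda>vv. aug_lag f Sg b F G c \<sigma> (u (Suc k)) vv (x k)
           + ereal (\<sigma> / 2 * wnorm2 (\<lambda>w. Eg w - (1 / \<sigma>) *\<^sub>R Sg w - G (adjoint G w)) (vv - v k)))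
        (\<lambda>_. True) (v (Suc k))
     \<and> x (Suc k) = x k + (\<tau> * \<sigma>) *\<^sub>R (adjoint F (u (Suc k)) + adjoint G (v (Suc k)) - c)"
proof (intro allI conjI)
  \<comment> \<open>The claim rests on an identity between objectives; the hypotheses on f, on Tf, on \<tau> and
    Eg_ge only matter for the existence of the minimisers, which step_uv already provides.\<close>
  fix k
  have "self_adjoint Sg" "self_adjoint Eg" "bij Eg"
    using Sg_psd Eg_pd pd_op_bij by (simp_all add: psd_op_def pd_op_def)
  then interpret sgs_quadratic_block Sg b F G c \<sigma> Eg
    using F_lin G_lin sigma_pos by (simp add: sgs_quadratic_block_def)
  show "is_arg_min
        (\<lambda>uu. aug_lag f Sg b F G c \<sigma> uu (v k) (x k)
           + ereal (F (adjoint G (inv Eg (b - G (x k) - Sg (v k)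
                 + \<sigma> *\<^sub>R G (c - adjoint F (u k) - adjoint G (v k))))) \<bullet> uu)
           + ereal (\<sigma> / 2 * wnorm2 Tf (uu - u k)))
        (\<lambda>_. True) (u (Suc k))"
    using spalm_step_u[OF sigma_pos Eg_pd step_uv] by (simp add: sgs_delta_def neg_grad_v_def)
  show "is_arg_min
        (\<lambda>vv. aug_lag f Sg b F G c \<sigma> (u (Suc k)) vv (x k)
           + ereal (\<sigma> / 2 * wnorm2 (\<lambda>w. Eg w - (1 / \<sigma>) *\<^sub>R Sg w - G (adjoint G w)) (vv - v k)))
        (\<lambda>_. True) (v (Suc k))"
    using spalm_step_v[OF step_uv] .
qed (fact step_x)

end
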